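(* Let $(V,\tau)$ be a topological mixed lattice space. (a) The map $Q:V\to V_p$, $Q(x)={}^ux$, is continuous and satisfies: $Q(V)=V_p$ and $Q(x)=x$ for all $x\in V_p$; $Q(tx)=tQ(x)$ for all $t\ge 0$, $x\in V$; $Q(x+y)\le Q(x)+Q(y)$ for all $x,y$; $Q(x)=0$ and $Q(-x)=0$ imply $x=0$; and $Q(x-Q(x))=0$ for all $x$. That is, $Q$ is a proper asymmetric cone norm with respect to the cone $V_p$. (b) The map $Q:V\to V_{sp}$, $Q(x)=x^u$, is continuous and satisfies: $Q(V)=V_{sp}$ and $Q(x)=x$ for all $x\in V_{sp}$; $Q(tx)=tQ(x)$ for all $t\ge0$; $Q(x+y)\le Q(x)+Q(y)$ for all $x,y$; $Q(x)=0$ and $Q(-x)=0$ imply $x=0$; $Q(x-Q(x))=0$ for all $x$. Moreover $Q$ is increasing for both orderings: $x\preccurlyeq y$ implies $Q(x)\preccurlyeq Q(y)$, and $x\le y$ implies $Q(x)\le Q(y)$.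
   Context: A mixed lattice vector space $(V,\le,\preccurlyeq)$ is a real vector space $V$ with two partial orderings $\le$ (initial order) and $\preccurlyeq$ (specific order), each making $V$ a partially ordered vector space, with positive cones $V_p=\{x:0\le x\}$, $V_{sp}=\{x:0\preccurlyeq x\}$, such that: (1) for all $x,y$ the elements $x\curlyvee y=\min\{w: w\succcurlyeq x,\ w\ge y\}$ and $x\curlywedge y=\max\{w: w\preccurlyeq x,\ w\le y\}$ exist (min/max with respect to $\le$); (2) $x\preccurlyeq y$ implies $x\le y$; (3) $x\curlyvee y, x\curlywedge y\in V_{sp}$ whenever $x,y\in V_{sp}$. A topological mixed lattice space is such a $V$ with a vector topology making $(x,y)\mapsto x\curlyvee y$ and $(x,y)\mapsto x\curlywedge y$ continuous. Notation: $x^u=0\curlyvee x$, ${}^ux=x\curlyvee 0$. Given a cone $C$ in a topological vector space $X$ with associated order $\le_C$, a continuous map $Q:X\to C$ is an asymmetric cone norm if $Q(x)=x$ for $x\in C$ and $Q(X)=C$; $Q(tx)=tQ(x)$ for $t\ge 0$; $Q(x+y)\le_C Q(x)+Q(y)$; and $Q(x)=Q(-x)=0$ implies $x=0$. It is proper if $Q(x-Q(x))=0$ for all $x$. *)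

theory Defs
  imports "HOL-Analysis.Analysis"
begin

definition pos_vector_order :: "('a::real_vector \<Rightarrow> 'a \<Rightarrow> bool) \<Rightarrow> bool" where
  "pos_vector_order r \<longleftrightarrow>
     (\<forall>x. r x x) \<and>
     (\<forall>x y. r x y \<and> r y x \<longrightarrow> x = y) \<and>
     (\<forall>x y z. r x y \<and> r y z \<longrightarrow> r x z) \<and>
     (\<forall>x y z. r x y \<longrightarrow> r (x + z) (y + z)) \<and>
     (\<forall>x y (t::real). r x y \<and> 0 \<le> t \<longrightarrow> r (t *\<^sub>R x) (t *\<^sub>R y))"

definition is_mixed_upper ::
  "('a \<Rightarrow> 'a \<Rightarrow> bool) \<Rightarrow> ('a \<Rightarrow> 'a \<Rightarrow> bool) \<Rightarrow> 'a \<Rightarrow> 'a \<Rightarrow> 'a \<Rightarrow> bool" where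
  "is_mixed_upper le sle x y w \<longleftrightarrow>
     sle x w \<and> le y w \<and> (\<forall>z. sle x z \<and> le y z \<longrightarrow> le w z)"

definition is_mixed_lower ::
  "('a \<Rightarrow> 'a \<Rightarrow> bool) \<Rightarrow> ('a \<Rightarrow> 'a \<Rightarrow> bool) \<Rightarrow> 'a \<Rightarrow> 'a \<Rightarrow> 'a \<Rightarrow> bool" where
  "is_mixed_lower le sle x y w \<longleftrightarrow>
     sle w x \<and> le w y \<and> (\<forall>z. sle z x \<and> le z y \<longrightarrow> le z w)"

definition mixed_upper ::
  "('a \<Rightarrow> 'a \<Rightarrow> bool) \<Rightarrow> ('a \<Rightarrow> 'a \<Rightarrow> bool) \<Rightarrow> 'a \<Rightarrow> 'a \<Rightarrow> 'a" where
  "mixed_upper le sle x y = (THE w. is_mixed_upper le sle x y w)"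

definition mixed_lower ::
  "('a \<Rightarrow> 'a \<Rightarrow> bool) \<Rightarrow> ('a \<Rightarrow> 'a \<Rightarrow> bool) \<Rightarrow> 'a \<Rightarrow> 'a \<Rightarrow> 'a" where
  "mixed_lower le sle x y = (THE w. is_mixed_lower le sle x y w)"

text \<open>Mixed lattice vector space (V, le, sle): le is the initial order, sle the specific order.\<close>
definition mixed_lattice_vector_space ::
  "('a::real_vector \<Rightarrow> 'a \<Rightarrow> bool) \<Rightarrow> ('a \<Rightarrow> 'a \<Rightarrow> bool) \<Rightarrow> bool" where
  "mixed_lattice_vector_space le sle \<longleftrightarrow>
     pos_vector_order le \<and> pos_vector_order sle \<and>
     (\<forall>x y. \<exists>w. is_mixed_upper le sle x y w) \<and>
     (\<forall>x y. \<exists>w. is_mixed_lower le sle x y w) \<and>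
     (\<forall>x y. sle x y \<longrightarrow> le x y) \<and>
     (\<forall>x y. sle 0 x \<and> sle 0 y \<longrightarrow>
        sle 0 (mixed_upper le sle x y) \<and> sle 0 (mixed_lower le sle x y))"

definition vector_topology :: "'a::{real_vector,topological_space} itself \<Rightarrow> bool" where
  "vector_topology _ \<longleftrightarrow>
     continuous_on UNIV (\<lambda>p::'a \<times> 'a. fst p + snd p) \<and>
     continuous_on UNIV (\<lambda>p::real \<times> 'a. fst p *\<^sub>R snd p)"

definition topological_mixed_lattice_space ::
  "('a::{real_vector,topological_space} \<Rightarrow> 'a \<Rightarrow> bool) \<Rightarrow> ('a \<Rightarrow> 'a \<Rightarrow> bool) \<Rightarrow> bool" where
  "topological_mixed_lattice_space le sle \<longleftrightarrow>
     mixed_lattice_vector_space le sle \<and> vector_topology TYPE('a) \<and>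
     continuous_on UNIV (\<lambda>p. mixed_upper le sle (fst p) (snd p)) \<and>
     continuous_on UNIV (\<lambda>p. mixed_lower le sle (fst p) (snd p))"

text \<open>x^u = 0 \<curlyvee> x   and   ^u x = x \<curlyvee> 0.\<close>
definition upart :: "('a::real_vector \<Rightarrow> 'a \<Rightarrow> bool) \<Rightarrow> ('a \<Rightarrow> 'a \<Rightarrow> bool) \<Rightarrow> 'a \<Rightarrow> 'a" where
  "upart le sle x = mixed_upper le sle 0 x"

definition lupart :: "('a::real_vector \<Rightarrow> 'a \<Rightarrow> bool) \<Rightarrow> ('a \<Rightarrow> 'a \<Rightarrow> bool) \<Rightarrow> 'a \<Rightarrow> 'a" where
  "lupart le sle x = mixed_upper le sle x 0"

end

theory Submission
  imports Defs
begin

text \<open>Apart from monotonicity, every property of \<open>x \<curlyvee> 0\<close> and \<open>0 \<curlyvee> x\<close> follows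
directly from the universal property of the mixed upper bound, combined with invariance of both
orders under translations and positive scalings; continuity is inherited from that of \<open>\<curlyvee>\<close>.
Monotonicity of \<open>0 \<curlyvee> x\<close> in the specific order is where axiom (3) on \<open>\<curlywedge>\<close> enters: for
\<open>z \<preccurlyeq> t\<close>, \<open>d = t - z\<close>, \<open>A = p \<curlyvee> z\<close> and \<open>B = p \<curlyvee> t\<close> one has \<open>B \<le> A + d\<close>, and
\<open>C = B \<curlywedge> A\<close> satisfies \<open>z \<le> B - d \<le> C\<close> and \<open>p \<preccurlyeq> C\<close>, so minimality of \<open>A\<close> forces
\<open>A = C \<preccurlyeq> B\<close>.\<close>

lemma
  assumes "pos_vector_order r"
  shows pos_vector_order_refl: "r x x"
    and pos_vector_order_antisym: "r x y \<Longrightarrow> r y x \<Longrightarrow> x = y"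
    and pos_vector_order_trans: "r x y \<Longrightarrow> r y z \<Longrightarrow> r x z"
    and pos_vector_order_add_right: "r x y \<Longrightarrow> r (x + z) (y + z)"
    and pos_vector_order_scaleR: "r x y \<Longrightarrow> 0 \<le> t \<Longrightarrow> r (t *\<^sub>R x) (t *\<^sub>R y)"
  using assms unfolding pos_vector_order_def by blast+

lemma pos_vector_order_add_mono:
  assumes "pos_vector_order r" "r a b" "r c d"
  shows "r (a + c) (b + d)"
proof -
  have "r (a + c) (b + c)" using pos_vector_order_add_right[OF assms(1,2)] .
  moreover have "r (c + b) (d + b)" using pos_vector_order_add_right[OF assms(1,3)] .
  ultimately show ?thesis
    using pos_vector_order_trans[OF assms(1)] by (simp add: add.commute)
qed

lemma pos_vector_order_translate_iff:
  assumes "pos_vector_order r"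
  shows "r (x + p) (y + p) \<longleftrightarrow> r x y"
  using pos_vector_order_add_right[OF assms, of "x + p" "y + p" "- p"]
    pos_vector_order_add_right[OF assms, of x y p]
  by auto

lemma pos_vector_order_diff_nonneg_iff:
  assumes "pos_vector_order r"
  shows "r 0 (y - x) \<longleftrightarrow> r x y"
  using pos_vector_order_translate_iff[OF assms, of 0 x "y - x"] by simp

lemma pos_vector_order_scaleR_iff:
  assumes "pos_vector_order r" "0 < t"
  shows "r (t *\<^sub>R x) (t *\<^sub>R y) \<longleftrightarrow> r x y"
  using pos_vector_order_scaleR[OF assms(1), of "t *\<^sub>R x" "t *\<^sub>R y" "inverse t"]
    pos_vector_order_scaleR[OF assms(1), of x y t] assms(2)
  by auto

locale mixed_lattice =
  fixes le sle :: "'a::real_vector \<Rightarrow> 'a \<Rightarrow> bool"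
  assumes mixed_lattice_vector_space: "mixed_lattice_vector_space le sle"
begin

abbreviation mixed_sup :: "'a \<Rightarrow> 'a \<Rightarrow> 'a" (infixl "\<curlyvee>" 70)
  where "x \<curlyvee> y \<equiv> mixed_upper le sle x y"

abbreviation mixed_inf :: "'a \<Rightarrow> 'a \<Rightarrow> 'a" (infixl "\<curlywedge>" 70)
  where "x \<curlywedge> y \<equiv> mixed_lower le sle x y"

lemma le_order: "pos_vector_order le"
  and sle_order: "pos_vector_order sle"
  and sle_imp_le: "sle x y \<Longrightarrow> le x y"
  and sle_nonneg_mixed_inf: "sle 0 x \<Longrightarrow> sle 0 y \<Longrightarrow> sle 0 (x \<curlywedge> y)"
  using mixed_lattice_vector_space unfolding mixed_lattice_vector_space_def by blast+

lemmas le_refl = pos_vector_order_refl[OF le_order]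
  and le_antisym = pos_vector_order_antisym[OF le_order]
  and le_trans = pos_vector_order_trans[OF le_order]
  and le_translate_iff = pos_vector_order_translate_iff[OF le_order]
  and sle_refl = pos_vector_order_refl[OF sle_order]
  and sle_antisym = pos_vector_order_antisym[OF sle_order]
  and sle_trans = pos_vector_order_trans[OF sle_order]
  and sle_translate_iff = pos_vector_order_translate_iff[OF sle_order]

lemma is_mixed_upper_unique:
  "is_mixed_upper le sle x y v \<Longrightarrow> is_mixed_upper le sle x y w \<Longrightarrow> v = w"
  unfolding is_mixed_upper_def using le_antisym by blast

lemma is_mixed_lower_unique:
  "is_mixed_lower le sle x y v \<Longrightarrow> is_mixed_lower le sle x y w \<Longrightarrow> v = w"
  unfolding is_mixed_lower_def using le_antisym by blast

lemma is_mixed_upper_mixed_sup: "is_mixed_upper le sle x y (x \<curlyvee> y)"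
proof -
  obtain w where "is_mixed_upper le sle x y w"
    using mixed_lattice_vector_space unfolding mixed_lattice_vector_space_def by blast
  then show ?thesis
    unfolding mixed_upper_def by (metis theI is_mixed_upper_unique)
qed

lemma is_mixed_lower_mixed_inf: "is_mixed_lower le sle x y (x \<curlywedge> y)"
proof -
  obtain w where "is_mixed_lower le sle x y w"
    using mixed_lattice_vector_space unfolding mixed_lattice_vector_space_def by blast
  then show ?thesis
    unfolding mixed_lower_def by (metis theI is_mixed_lower_unique)
qed

lemma mixed_sup_eqI: "is_mixed_upper le sle x y w \<Longrightarrow> x \<curlyvee> y = w"
  using is_mixed_upper_unique is_mixed_upper_mixed_sup by blast

lemma mixed_inf_eqI: "is_mixed_lower le sle x y w \<Longrightarrow> x \<curlywedge> y = w"
  using is_mixed_lower_unique is_mixed_lower_mixed_inf by blast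

lemma sle_mixed_sup: "sle x (x \<curlyvee> y)"
  and le_mixed_sup: "le y (x \<curlyvee> y)"
  and mixed_sup_least: "sle x z \<Longrightarrow> le y z \<Longrightarrow> le (x \<curlyvee> y) z"
  using is_mixed_upper_mixed_sup[of x y] unfolding is_mixed_upper_def by blast+

lemma mixed_inf_sle: "sle (x \<curlywedge> y) x"
  and mixed_inf_le: "le (x \<curlywedge> y) y"
  and mixed_inf_greatest: "sle z x \<Longrightarrow> le z y \<Longrightarrow> le z (x \<curlywedge> y)"
  using is_mixed_lower_mixed_inf[of x y] unfolding is_mixed_lower_def by blast+

lemma mixed_sup_scaleR:
  assumes "0 \<le> t"
  shows "(t *\<^sub>R x) \<curlyvee> (t *\<^sub>R y) = t *\<^sub>R (x \<curlyvee> y)"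
proof (cases "t = 0")
  case True
  have "is_mixed_upper le sle 0 0 0"
    unfolding is_mixed_upper_def using le_refl sle_refl by blast
  with True show ?thesis by (simp add: mixed_sup_eqI)
next
  case False
  with assms have "0 < t" by simp
  note le_scaleR = pos_vector_order_scaleR_iff[OF le_order this]
    and sle_scaleR = pos_vector_order_scaleR_iff[OF sle_order this]
  have "is_mixed_upper le sle (t *\<^sub>R x) (t *\<^sub>R y) (t *\<^sub>R (x \<curlyvee> y))"
    unfolding is_mixed_upper_def
  proof (intro conjI allI impI)
    fix z assume z: "sle (t *\<^sub>R x) z \<and> le (t *\<^sub>R y) z"
    have "z = t *\<^sub>R (inverse t *\<^sub>R z)" using \<open>0 < t\<close> by simp
    with z have "sle x (inverse t *\<^sub>R z)" "le y (inverse t *\<^sub>R z)"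
      using le_scaleR sle_scaleR by metis+
    then have "le (t *\<^sub>R (x \<curlyvee> y)) (t *\<^sub>R (inverse t *\<^sub>R z))"
      using le_scaleR mixed_sup_least by blast
    with \<open>z = _\<close> show "le (t *\<^sub>R (x \<curlyvee> y)) z" by simp
  qed (use le_scaleR sle_scaleR sle_mixed_sup le_mixed_sup in auto)
  then show ?thesis by (rule mixed_sup_eqI)
qed

lemma mixed_sup_add_le: "le ((x + x') \<curlyvee> (y + y')) (x \<curlyvee> y + x' \<curlyvee> y')"
  using pos_vector_order_add_mono[OF sle_order sle_mixed_sup[of x y] sle_mixed_sup[of x' y']]
    pos_vector_order_add_mono[OF le_order le_mixed_sup[of y x] le_mixed_sup[of y' x']]
  by (rule mixed_sup_least)

lemma mixed_inf_translate: "(x + p) \<curlywedge> (y + p) = x \<curlywedge> y + p"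
proof (rule mixed_inf_eqI)
  show "is_mixed_lower le sle (x + p) (y + p) (x \<curlywedge> y + p)"
    unfolding is_mixed_lower_def
  proof (intro conjI allI impI)
    fix z assume "sle z (x + p) \<and> le z (y + p)"
    then have "sle (z - p) x" "le (z - p) y"
      using le_translate_iff[of "z - p" p y] sle_translate_iff[of "z - p" p x] by auto
    then show "le z (x \<curlywedge> y + p)"
      using le_translate_iff[of "z - p" p "x \<curlywedge> y"] mixed_inf_greatest by auto
  qed (simp_all add: le_translate_iff sle_translate_iff mixed_inf_sle mixed_inf_le)
qed

text \<open>Axiom (3) only speaks about the specific lower bound \<open>0\<close>; translation moves it to
an arbitrary lower bound \<open>p\<close>.\<close>

lemma sle_mixed_inf:
  assumes "sle p x" "sle p y"
  shows "sle p (x \<curlywedge> y)"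
proof -
  have "sle 0 ((x - p) \<curlywedge> (y - p))"
    using assms by (simp add: sle_nonneg_mixed_inf pos_vector_order_diff_nonneg_iff[OF sle_order])
  also have "(x - p) \<curlywedge> (y - p) = x \<curlywedge> y - p"
    using mixed_inf_translate[of x "- p" y] by simp
  finally show ?thesis by (simp add: pos_vector_order_diff_nonneg_iff[OF sle_order])
qed

lemma mixed_sup_mono_sle:
  assumes "sle z t"
  shows "sle (p \<curlyvee> z) (p \<curlyvee> t)"
proof -
  define d where "d = t - z"
  define A where "A = p \<curlyvee> z"
  define B where "B = p \<curlyvee> t"
  define C where "C = B \<curlywedge> A"
  have "sle 0 d" and t: "t = z + d"
    using assms unfolding d_def by (simp_all add: pos_vector_order_diff_nonneg_iff[OF sle_order])
  then have "sle p (A + d)"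
    using sle_translate_iff[of 0 A d] sle_mixed_sup[of p z] sle_trans
    unfolding A_def by (simp add: add.commute)
  moreover have "le t (A + d)"
    using le_mixed_sup[where x = p and y = z] le_translate_iff[of z d A] t unfolding A_def by simp
  ultimately have "le B (A + d)"
    unfolding B_def by (rule mixed_sup_least)
  have "sle (B - d) B"
    using \<open>sle 0 d\<close> sle_translate_iff[of 0 "B - d" d] by simp
  moreover have "le (B - d) A"
    using \<open>le B (A + d)\<close> le_translate_iff[of "B - d" d A] by simp
  ultimately have "le (B - d) C"
    unfolding C_def by (rule mixed_inf_greatest)
  moreover have "le z (B - d)"
    using le_mixed_sup[where x = p and y = t] le_translate_iff[of z d "B - d"] t
    unfolding B_def by simp
  ultimately have "le z C"
    using le_trans by blast
  have "sle p C"
    unfolding C_def A_def B_def by (intro sle_mixed_inf sle_mixed_sup)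
  then have "le A C"
    unfolding A_def using \<open>le z C\<close> by (rule mixed_sup_least)
  then have "A = C"
    using mixed_inf_le le_antisym unfolding C_def by blast
  then show ?thesis
    using mixed_inf_sle unfolding A_def B_def C_def by metis
qed

lemma mixed_sup_mono_le: "le y y' \<Longrightarrow> le (x \<curlyvee> y) (x \<curlyvee> y')"
  using le_mixed_sup le_trans mixed_sup_least sle_mixed_sup by blast

lemma lupart_nonneg: "le 0 (lupart le sle x)"
  unfolding lupart_def by (rule le_mixed_sup)

lemma lupart_eq_self: "le 0 x \<Longrightarrow> lupart le sle x = x"
  unfolding lupart_def by (rule mixed_sup_eqI) (simp add: is_mixed_upper_def sle_refl sle_imp_le)

lemma range_lupart: "range (lupart le sle) = {x. le 0 x}"
  using lupart_nonneg by (auto simp: image_iff) (metis lupart_eq_self)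

lemma lupart_scaleR: "0 \<le> t \<Longrightarrow> lupart le sle (t *\<^sub>R x) = t *\<^sub>R lupart le sle x"
  using mixed_sup_scaleR[of t x 0] unfolding lupart_def by simp

lemma lupart_add_le: "le (lupart le sle (x + y)) (lupart le sle x + lupart le sle y)"
  using mixed_sup_add_le[of x y 0 0] unfolding lupart_def by simp

lemma lupart_eq_0_iff: "lupart le sle x = 0 \<longleftrightarrow> sle x 0"
proof
  show "lupart le sle x = 0 \<Longrightarrow> sle x 0"
    using sle_mixed_sup[of x 0] unfolding lupart_def by simp
  show "sle x 0 \<Longrightarrow> lupart le sle x = 0"
    unfolding lupart_def by (rule mixed_sup_eqI) (simp add: is_mixed_upper_def le_refl)
qed

lemma lupart_definite: "lupart le sle x = 0 \<Longrightarrow> lupart le sle (- x) = 0 \<Longrightarrow> x = 0"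
  using sle_translate_iff[of "- x" x 0] sle_antisym by (auto simp: lupart_eq_0_iff)

lemma lupart_diff_lupart: "lupart le sle (x - lupart le sle x) = 0"
  using sle_mixed_sup[of x 0] sle_translate_iff[of "x - lupart le sle x" "lupart le sle x" 0]
  unfolding lupart_eq_0_iff by (simp add: lupart_def)

lemma upart_nonneg: "sle 0 (upart le sle x)"
  unfolding upart_def by (rule sle_mixed_sup)

lemma upart_eq_self: "sle 0 x \<Longrightarrow> upart le sle x = x"
  unfolding upart_def by (rule mixed_sup_eqI) (simp add: is_mixed_upper_def le_refl)

lemma range_upart: "range (upart le sle) = {x. sle 0 x}"
  using upart_nonneg by (auto simp: image_iff) (metis upart_eq_self)

lemma upart_scaleR: "0 \<le> t \<Longrightarrow> upart le sle (t *\<^sub>R x) = t *\<^sub>R upart le sle x"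
  using mixed_sup_scaleR[of t 0 x] unfolding upart_def by simp

lemma upart_add_le: "le (upart le sle (x + y)) (upart le sle x + upart le sle y)"
  using mixed_sup_add_le[of 0 0 x y] unfolding upart_def by simp

lemma upart_eq_0_iff: "upart le sle x = 0 \<longleftrightarrow> le x 0"
proof
  show "upart le sle x = 0 \<Longrightarrow> le x 0"
    using le_mixed_sup[where x = 0 and y = x] unfolding upart_def by simp
  show "le x 0 \<Longrightarrow> upart le sle x = 0"
    unfolding upart_def by (rule mixed_sup_eqI) (simp add: is_mixed_upper_def sle_refl sle_imp_le)
qed

lemma upart_definite: "upart le sle x = 0 \<Longrightarrow> upart le sle (- x) = 0 \<Longrightarrow> x = 0"
  using le_translate_iff[of "- x" x 0] le_antisym by (auto simp: upart_eq_0_iff)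

lemma upart_diff_upart: "upart le sle (x - upart le sle x) = 0"
  using le_mixed_sup[where x = 0 and y = x] le_translate_iff[of "x - upart le sle x" "upart le sle x" 0]
  unfolding upart_eq_0_iff by (simp add: upart_def)

lemma upart_mono_sle: "sle x y \<Longrightarrow> sle (upart le sle x) (upart le sle y)"
  unfolding upart_def by (rule mixed_sup_mono_sle)

lemma upart_mono_le: "le x y \<Longrightarrow> le (upart le sle x) (upart le sle y)"
  unfolding upart_def by (rule mixed_sup_mono_le)

end

lemma
  fixes le sle :: "'a::{real_vector,topological_space} \<Rightarrow> 'a \<Rightarrow> bool"
  assumes "continuous_on UNIV (\<lambda>p. mixed_upper le sle (fst p) (snd p))"
  shows continuous_on_lupart: "continuous_on UNIV (lupart le sle)"
    and continuous_on_upart: "continuous_on UNIV (upart le sle)"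
  using continuous_on_compose2[OF assms, of UNIV "\<lambda>x. (x, 0)"]
    continuous_on_compose2[OF assms, of UNIV "\<lambda>x. (0, x)"]
  unfolding lupart_def upart_def by (simp_all add: continuous_on_Pair)

theorem theorem5p2:
  fixes le sle :: "'a::{real_vector,topological_space} \<Rightarrow> 'a \<Rightarrow> bool"
  assumes "topological_mixed_lattice_space le sle"
  defines "Vp \<equiv> {x. le 0 x}" and "Vsp \<equiv> {x. sle 0 x}"
  shows
   "(let Q = lupart le sle in
      continuous_on UNIV Q \<and>
      Q ` UNIV = Vp \<and> (\<forall>x\<in>Vp. Q x = x) \<and>
      (\<forall>(t::real) x. 0 \<le> t \<longrightarrow> Q (t *\<^sub>R x) = t *\<^sub>R Q x) \<and>
      (\<forall>x y. le (Q (x + y)) (Q x + Q y)) \<and>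
      (\<forall>x. Q x = 0 \<and> Q (- x) = 0 \<longrightarrow> x = 0) \<and>
      (\<forall>x. Q (x - Q x) = 0))
    \<and>
    (let Q = upart le sle in
      continuous_on UNIV Q \<and>
      Q ` UNIV = Vsp \<and> (\<forall>x\<in>Vsp. Q x = x) \<and>
      (\<forall>(t::real) x. 0 \<le> t \<longrightarrow> Q (t *\<^sub>R x) = t *\<^sub>R Q x) \<and>
      (\<forall>x y. le (Q (x + y)) (Q x + Q y)) \<and>
      (\<forall>x. Q x = 0 \<and> Q (- x) = 0 \<longrightarrow> x = 0) \<and>
      (\<forall>x. Q (x - Q x) = 0) \<and>
      (\<forall>x y. sle x y \<longrightarrow> sle (Q x) (Q y)) \<and>
      (\<forall>x y. le x y \<longrightarrow> le (Q x) (Q y)))"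
proof -
  have "mixed_lattice le sle"
    and cont: "continuous_on UNIV (\<lambda>p. mixed_upper le sle (fst p) (snd p))"
    using assms(1) unfolding topological_mixed_lattice_space_def mixed_lattice_def by blast+
  interpret mixed_lattice le sle by fact
  show ?thesis
    unfolding Let_def Vp_def Vsp_def
    by (intro conjI allI impI ballI)
      (auto intro: continuous_on_lupart[OF cont] continuous_on_upart[OF cont]
        lupart_add_le lupart_definite upart_add_le upart_definite upart_mono_sle upart_mono_le
        simp: range_lupart range_upart lupart_eq_self upart_eq_self lupart_scaleR upart_scaleR
        lupart_diff_lupart upart_diff_upart)
qed

end
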